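(* Let $1<p<\infty$, let $U$ be a domain in $\mathbb{C}^n$, let $Z=\{z\in\mathbb{C}^n: z_j=0\text{ for some }1\le j\le n\}$ and $U^*=U\setminus Z$. Suppose $\lambda:U\to[0,\infty]$ is a measurable function such that the restriction $\lambda|_{U^*}$ is an admissible weight on $U^*$. Then $\lambda$ is an admissible weight on $U$.
   Context: For a domain $V\subset\mathbb{C}^n$ and a measurable $\lambda:V\to[0,\infty]$ positive a.e., $A^p(V,\lambda)$ is the space of holomorphic functions $f$ on $V$ with $\|f\|_{L^p(V,\lambda)}^p=\int_V|f|^p\lambda\,dV<\infty$. The weight $\lambda$ is admissible on $V$ if for each compact $K\subset V$ there is $C_K>0$ such that $\sup_K|f|\le C_K\|f\|_{L^p(V,\lambda)}$ for every $f\in A^p(V,\lambda)$. *)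

theory Defs
  imports "HOL-Analysis.Analysis"
begin

definition domain :: "(complex ^ 'n) set \<Rightarrow> bool" where
  "domain V \<longleftrightarrow> open V \<and> connected V \<and> V \<noteq> {}"

definition holo :: "(complex ^ 'n \<Rightarrow> complex) \<Rightarrow> (complex ^ 'n) set \<Rightarrow> bool" where
  "holo f V \<longleftrightarrow> (\<forall>z\<in>V. \<exists>L. (f has_derivative L) (at z) \<and>
       (\<forall>c x. L (\<chi> i. c * x $ i) = c * L x))"

definition coord_hyperplanes :: "(complex ^ 'n) set" where
  "coord_hyperplanes = {z. \<exists>j. z $ j = 0}"

definition wint :: "real \<Rightarrow> (complex ^ 'n) set \<Rightarrow> (complex ^ 'n \<Rightarrow> ennreal)
    \<Rightarrow> (complex ^ 'n \<Rightarrow> complex) \<Rightarrow> ennreal" where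
  "wint p V lam f = (\<integral>\<^sup>+ z. indicator V z * ennreal (norm (f z) powr p) * lam z \<partial>lebesgue)"

definition Lp_wnorm :: "real \<Rightarrow> (complex ^ 'n) set \<Rightarrow> (complex ^ 'n \<Rightarrow> ennreal)
    \<Rightarrow> (complex ^ 'n \<Rightarrow> complex) \<Rightarrow> real" where
  "Lp_wnorm p V lam f = enn2real (wint p V lam f) powr (1 / p)"

definition Bergman :: "real \<Rightarrow> (complex ^ 'n) set \<Rightarrow> (complex ^ 'n \<Rightarrow> ennreal)
    \<Rightarrow> (complex ^ 'n \<Rightarrow> complex) set" where
  "Bergman p V lam = {f. holo f V \<and> wint p V lam f < \<infinity>}"

definition weight :: "(complex ^ 'n) set \<Rightarrow> (complex ^ 'n \<Rightarrow> ennreal) \<Rightarrow> bool" where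
  "weight V lam \<longleftrightarrow> (\<lambda>z. indicator V z * lam z) \<in> borel_measurable lebesgue \<and>
     (AE z in lebesgue. z \<in> V \<longrightarrow> lam z > 0)"

definition admissible :: "real \<Rightarrow> (complex ^ 'n) set \<Rightarrow> (complex ^ 'n \<Rightarrow> ennreal) \<Rightarrow> bool" where
  "admissible p V lam \<longleftrightarrow> weight V lam \<and>
     (\<forall>K. compact K \<and> K \<subseteq> V \<longrightarrow>
        (\<exists>C>0. \<forall>f\<in>Bergman p V lam. \<forall>z\<in>K. norm (f z) \<le> C * Lp_wnorm p V lam f))"

end

theory Submission
  imports Defs "HOL-Complex_Analysis.Cauchy_Integral_Formula"
begin

text \<open>Around each point \<open>z\<close> of a compact \<open>K \<subseteq> U\<close> choose a small closed polydisc whose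
  radii are \<open>\<delta>\<close> in the coordinates where \<open>z\<close> is close to the hyperplane \<open>z\<^sub>j = 0\<close> and \<open>\<delta>/4\<close>
  elsewhere. Its distinguished boundary then stays at distance \<open>\<delta>/4\<close> from every
  coordinate hyperplane, so all these boundaries lie in one compact subset \<open>K'\<close> of
  \<open>U - Z\<close>. By the maximum principle in each variable separately, \<open>|f(z)|\<close> is bounded by
  \<open>sup\<^sub>K\<^sub>' |f|\<close>, which admissibility on \<open>U - Z\<close> bounds by the weighted norm over \<open>U - Z\<close>, and
  that is at most the norm over \<open>U\<close>. Positivity of the weight almost everywhere
  survives because \<open>Z\<close> is a null set.\<close>

definition vec_upd :: "'a ^ 'n \<Rightarrow> 'n \<Rightarrow> 'a \<Rightarrow> 'a ^ 'n" where
  "vec_upd w k a = (\<chi> i. if i = k then a else w $ i)"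

lemma vec_upd_nth [simp]: "vec_upd w k a $ i = (if i = k then a else w $ i)"
  by (simp add: vec_upd_def)

definition cpolydisc :: "complex ^ 'n \<Rightarrow> ('n \<Rightarrow> real) \<Rightarrow> (complex ^ 'n) set" where
  "cpolydisc z r = {w. \<forall>j. norm (w $ j - z $ j) \<le> r j}"

definition distinguished_boundary :: "complex ^ 'n \<Rightarrow> ('n \<Rightarrow> real) \<Rightarrow> (complex ^ 'n) set" where
  "distinguished_boundary z r = {w. \<forall>j. norm (w $ j - z $ j) = r j}"

lemma holo_subset: "holo f U \<Longrightarrow> V \<subseteq> U \<Longrightarrow> holo f V"
  unfolding holo_def by blast

lemma holo_slice_field_differentiable:
  fixes f :: "complex ^ 'n \<Rightarrow> complex"
  assumes "holo f U" and "vec_upd w k \<zeta> \<in> U"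
  shows "(\<lambda>\<zeta>. f (vec_upd w k \<zeta>)) field_differentiable (at \<zeta>)"
proof -
  obtain L where L: "(f has_derivative L) (at (vec_upd w k \<zeta>))"
    and L_clinear: "\<And>c x. L (\<chi> i. c * x $ i) = c * L x"
    using assms unfolding holo_def by blast
  have "linear (axis k :: complex \<Rightarrow> complex ^ 'n)"
    by (rule linearI) (auto simp: axis_def vec_eq_iff)
  then have axis_bounded_linear: "bounded_linear (axis k :: complex \<Rightarrow> complex ^ 'n)"
    by (simp add: linear_conv_bounded_linear)
  have "vec_upd w k = (\<lambda>\<zeta>. axis k \<zeta> + (\<chi> i. if i = k then 0 else w $ i))"
    by (auto simp: vec_eq_iff axis_def)
  then have "(vec_upd w k has_derivative axis k) (at \<zeta>)"
    using has_derivative_add_const[OF bounded_linear.has_derivative[OF axis_bounded_linear has_derivative_ident]]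
    by simp
  from this L have "((\<lambda>\<zeta>. f (vec_upd w k \<zeta>)) has_derivative (\<lambda>h. L (axis k h))) (at \<zeta>)"
    by (rule has_derivative_compose)
  moreover have "(\<lambda>h. L (axis k h)) = (\<lambda>h. L (axis k 1) * h)"
  proof
    fix h :: complex
    have "(\<chi> i. h * axis k 1 $ i) = axis k h"
      by (auto simp: vec_eq_iff axis_def)
    then show "L (axis k h) = L (axis k 1) * h"
      using L_clinear[of h "axis k 1"] by (metis mult.commute)
  qed
  ultimately show ?thesis
    unfolding field_differentiable_def has_field_derivative_def by metis
qed

lemma holo_norm_le_on_slice_circle:
  fixes f :: "complex ^ 'n \<Rightarrow> complex"
  assumes "holo f U" and "0 < r"
    and slice_in_U: "\<And>\<zeta>. norm (\<zeta> - c) \<le> r \<Longrightarrow> vec_upd w k \<zeta> \<in> U"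
    and bound: "\<And>\<zeta>. norm (\<zeta> - c) = r \<Longrightarrow> norm (f (vec_upd w k \<zeta>)) \<le> B"
  shows "norm (f (vec_upd w k c)) \<le> B"
proof -
  let ?g = "\<lambda>\<zeta>. f (vec_upd w k \<zeta>)"
  have holo_g: "?g holomorphic_on cball c r"
    unfolding holomorphic_on_def
  proof
    fix \<zeta> assume "\<zeta> \<in> cball c r"
    then have "norm (\<zeta> - c) \<le> r"
      by (simp add: dist_norm norm_minus_commute)
    then show "?g field_differentiable at \<zeta> within cball c r"
      by (rule field_differentiable_at_within[OF
            holo_slice_field_differentiable[OF \<open>holo f U\<close> slice_in_U]])
  qed
  have "norm ((deriv ^^ 0) ?g c) \<le> fact 0 * B / r ^ 0"
  proof (rule Cauchy_inequality[OF holomorphic_on_subset[OF holo_g ball_subset_cball]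
        holomorphic_on_imp_continuous_on[OF holo_g] \<open>0 < r\<close>])
    fix \<zeta> assume "norm (c - \<zeta>) = r"
    then show "norm (?g \<zeta>) \<le> B"
      by (intro bound) (simp add: norm_minus_commute)
  qed
  then show ?thesis by simp
qed

lemma holo_norm_le_on_distinguished_boundary:
  fixes f :: "complex ^ 'n \<Rightarrow> complex"
  assumes holo: "holo f U" and polydisc: "cpolydisc z r \<subseteq> U" and r_pos: "\<And>j. 0 < r j"
    and bound: "\<And>w. w \<in> distinguished_boundary z r \<Longrightarrow> norm (f w) \<le> B"
  shows "norm (f z) \<le> B"
proof -
  have "norm (f w) \<le> B"
    if "finite S" "\<forall>j\<in>S. w $ j = z $ j" "\<forall>j. j \<notin> S \<longrightarrow> norm (w $ j - z $ j) = r j" for S w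
    using that
  proof (induction S arbitrary: w rule: finite_induct)
    case empty
    then show ?case by (intro bound) (simp add: distinguished_boundary_def)
  next
    case (insert k S)
    have "norm (f (vec_upd w k (z $ k))) \<le> B"
    proof (rule holo_norm_le_on_slice_circle[OF holo r_pos])
      fix \<zeta> assume \<zeta>: "norm (\<zeta> - z $ k) \<le> r k"
      have "norm (vec_upd w k \<zeta> $ j - z $ j) \<le> r j" for j
        using insert.prems \<zeta> less_imp_le[OF r_pos[of j]] by (cases "j \<in> insert k S") auto
      with polydisc show "vec_upd w k \<zeta> \<in> U"
        unfolding cpolydisc_def by blast
    next
      fix \<zeta> assume \<zeta>: "norm (\<zeta> - z $ k) = r k"
      show "norm (f (vec_upd w k \<zeta>)) \<le> B"
      proof (rule insert.IH)
        show "\<forall>j\<in>S. vec_upd w k \<zeta> $ j = z $ j"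
          using insert.prems insert.hyps(2) by auto
        show "\<forall>j. j \<notin> S \<longrightarrow> norm (vec_upd w k \<zeta> $ j - z $ j) = r j"
          using insert.prems \<zeta> by auto
      qed
    qed
    moreover have "vec_upd w k (z $ k) = w"
      using insert.prems by (simp add: vec_eq_iff)
    ultimately show ?case by simp
  qed
  from this[of UNIV z] show ?thesis by simp
qed

lemma norm_le_sum_norm_nth: "norm (x :: 'a :: real_normed_vector ^ 'n) \<le> (\<Sum>i\<in>UNIV. norm (x $ i))"
  unfolding norm_vec_def by (rule L2_set_le_sum) simp

lemma cpolydisc_subset_cball: "cpolydisc z r \<subseteq> cball z (\<Sum>j\<in>UNIV. r j)"
proof
  fix w assume "w \<in> cpolydisc z r"
  have "norm (z - w) \<le> (\<Sum>j\<in>UNIV. norm ((z - w) $ j))"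
    by (rule norm_le_sum_norm_nth)
  also have "\<dots> \<le> (\<Sum>j\<in>UNIV. r j)"
    using \<open>w \<in> cpolydisc z r\<close> by (intro sum_mono) (simp add: cpolydisc_def norm_minus_commute)
  finally show "w \<in> cball z (\<Sum>j\<in>UNIV. r j)"
    by (simp add: dist_norm)
qed

lemma distinguished_boundary_subset_cpolydisc: "distinguished_boundary z r \<subseteq> cpolydisc z r"
  by (auto simp: cpolydisc_def distinguished_boundary_def)

lemma cpolydisc_with_boundary_off_coord_hyperplanes:
  fixes z :: "complex ^ 'n" and \<delta> :: real
  assumes "0 < \<delta>"
  obtains r where "\<And>j. 0 < r j" "cpolydisc z r \<subseteq> cball z (CARD('n) * \<delta>)"
    "distinguished_boundary z r \<subseteq> {w. \<forall>j. \<delta>/4 \<le> norm (w $ j)}"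
proof
  define r where "r j = (if norm (z $ j) \<le> \<delta>/2 then \<delta> else \<delta>/4)" for j
  show "0 < r j" for j
    using \<open>0 < \<delta>\<close> by (simp add: r_def)
  have "(\<Sum>j\<in>UNIV. r j) \<le> CARD('n) * \<delta>"
    using sum_bounded_above[of UNIV r \<delta>] \<open>0 < \<delta>\<close> by (simp add: r_def)
  then show "cpolydisc z r \<subseteq> cball z (CARD('n) * \<delta>)"
    using cpolydisc_subset_cball[of z r] subset_cball by blast
  show "distinguished_boundary z r \<subseteq> {w. \<forall>j. \<delta>/4 \<le> norm (w $ j)}"
  proof (intro subsetI CollectI allI)
    fix w j
    assume "w \<in> distinguished_boundary z r"
    then have "norm (w $ j - z $ j) = r j"
      by (simp add: distinguished_boundary_def)
    moreover have "norm (w $ j - z $ j) \<le> norm (w $ j) + norm (z $ j)"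
      by (rule norm_triangle_ineq4)
    moreover have "norm (z $ j) - norm (w $ j) \<le> norm (w $ j - z $ j)"
      using norm_triangle_ineq2[of "z $ j" "w $ j"] by (simp add: norm_minus_commute)
    ultimately show "\<delta>/4 \<le> norm (w $ j)"
      using \<open>0 < \<delta>\<close> by (auto simp: r_def split: if_splits)
  qed
qed

lemma compact_set_of_distinguished_boundaries:
  fixes K U :: "(complex ^ 'n) set"
  assumes "compact K" "K \<subseteq> U" "open U"
  obtains K' where "compact K'" "K' \<subseteq> U - coord_hyperplanes"
    "\<And>z. z \<in> K \<Longrightarrow> \<exists>r. (\<forall>j. 0 < r j) \<and> cpolydisc z r \<subseteq> U \<and> distinguished_boundary z r \<subseteq> K'"
proof -
  obtain e where "0 < e" and e: "(\<Union>x\<in>K. ball x e) \<subseteq> U"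
    using compact_subset_open_imp_ball_epsilon_subset[OF \<open>compact K\<close> \<open>open U\<close> \<open>K \<subseteq> U\<close>] .
  define \<delta> where "\<delta> = e / (2 * CARD('n))"
  have "0 < \<delta>" and "CARD('n) * \<delta> < e"
    using \<open>0 < e\<close> by (simp_all add: \<delta>_def field_simps)
  define K_thick where "K_thick = {x + y |x y. x \<in> K \<and> y \<in> cball 0 (CARD('n) * \<delta>)}"
  define K' where "K' = K_thick \<inter> {w. \<forall>j. \<delta>/4 \<le> norm (w $ j)}"
  have "closed {w :: complex ^ 'n. \<forall>j. \<delta>/4 \<le> norm (w $ j)}"
    unfolding Collect_all_eq by (intro closed_INT ballI closed_Collect_le continuous_intros)
  then have "compact K'"
    unfolding K'_def K_thick_def by (intro compact_Int_closed compact_sums \<open>compact K\<close> compact_cball)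
  moreover have "K' \<subseteq> U - coord_hyperplanes"
  proof
    fix w assume "w \<in> K'"
    then obtain x y where "w = x + y" "x \<in> K" "norm y \<le> CARD('n) * \<delta>"
      and far: "\<forall>j. \<delta>/4 \<le> norm (w $ j)"
      unfolding K'_def K_thick_def by auto
    then have "w \<in> ball x e"
      using \<open>CARD('n) * \<delta> < e\<close> by (simp add: dist_norm)
    with e \<open>x \<in> K\<close> have "w \<in> U" by blast
    moreover have "w $ j \<noteq> 0" for j
      using far[rule_format, of j] \<open>0 < \<delta>\<close> by auto
    ultimately show "w \<in> U - coord_hyperplanes"
      by (simp add: coord_hyperplanes_def)
  qed
  moreover have "\<exists>r. (\<forall>j. 0 < r j) \<and> cpolydisc z r \<subseteq> U \<and> distinguished_boundary z r \<subseteq> K'"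
    if "z \<in> K" for z
  proof -
    obtain r where "\<And>j. 0 < r j" and small: "cpolydisc z r \<subseteq> cball z (CARD('n) * \<delta>)"
      and off: "distinguished_boundary z r \<subseteq> {w. \<forall>j. \<delta>/4 \<le> norm (w $ j)}"
      using cpolydisc_with_boundary_off_coord_hyperplanes[where z = z, OF \<open>0 < \<delta>\<close>] by blast
    have "cball z (CARD('n) * \<delta>) \<subseteq> ball z e"
      using \<open>CARD('n) * \<delta> < e\<close> by (simp add: cball_subset_ball_iff)
    also have "\<dots> \<subseteq> U"
      using e \<open>z \<in> K\<close> by blast
    finally have "cball z (CARD('n) * \<delta>) \<subseteq> U" .
    moreover have "cball z (CARD('n) * \<delta>) \<subseteq> K_thick"
    proof
      fix w assume "w \<in> cball z (CARD('n) * \<delta>)"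
      then have "w = z + (w - z) \<and> z \<in> K \<and> w - z \<in> cball 0 (CARD('n) * \<delta>)"
        using \<open>z \<in> K\<close> by (simp add: dist_norm norm_minus_commute)
      then show "w \<in> K_thick"
        unfolding K_thick_def by blast
    qed
    ultimately show ?thesis
      using \<open>\<And>j. 0 < r j\<close> small off distinguished_boundary_subset_cpolydisc[of z r]
      unfolding K'_def by blast
  qed
  ultimately show ?thesis by (rule that)
qed

lemma wint_mono_set: "V \<subseteq> U \<Longrightarrow> wint p V lam f \<le> wint p U lam f"
  unfolding wint_def by (intro nn_integral_mono mult_right_mono) (auto simp: indicator_def)

lemma Bergman_antimono: "V \<subseteq> U \<Longrightarrow> Bergman p U lam \<subseteq> Bergman p V lam"
  unfolding Bergman_def using holo_subset le_less_trans[OF wint_mono_set] by blast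

lemma Lp_wnorm_mono_set:
  assumes "V \<subseteq> U" "0 \<le> p" "f \<in> Bergman p U lam"
  shows "Lp_wnorm p V lam f \<le> Lp_wnorm p U lam f"
proof -
  have "enn2real (wint p V lam f) \<le> enn2real (wint p U lam f)"
    using assms wint_mono_set by (intro enn2real_mono) (auto simp: Bergman_def)
  then show ?thesis
    unfolding Lp_wnorm_def using \<open>0 \<le> p\<close> by (intro powr_mono2) auto
qed

lemma coord_hyperplanes_null: "(coord_hyperplanes :: (complex ^ 'n) set) \<in> null_sets lebesgue"
proof -
  have "negligible (\<Union>j. {x :: complex ^ 'n. axis j 1 \<bullet> x = 0})"
    by (intro negligible_Union) (auto intro!: negligible_hyperplane simp: axis_eq_0_iff)
  moreover have "coord_hyperplanes \<subseteq> (\<Union>j. {x :: complex ^ 'n. axis j 1 \<bullet> x = 0})"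
    unfolding coord_hyperplanes_def by (auto simp: inner_axis') (metis zero_complex.simps(1))
  ultimately show ?thesis
    using negligible_subset negligible_iff_null_sets by metis
qed

lemma weight_Diff_null:
  assumes "weight (V - N) lam" "N \<in> null_sets lebesgue"
    and "(\<lambda>z. indicator V z * lam z) \<in> borel_measurable lebesgue"
  shows "weight V lam"
proof -
  have "AE z in lebesgue. z \<in> V - N \<longrightarrow> lam z > 0"
    using assms(1) by (simp add: weight_def)
  moreover have "AE z in lebesgue. z \<notin> N"
    using AE_not_in[OF assms(2)] .
  ultimately have "AE z in lebesgue. z \<in> V \<longrightarrow> lam z > 0"
    by eventually_elim auto
  with assms(3) show ?thesis by (simp add: weight_def)
qed

lemma Bergman_norm_le_via_distinguished_boundaries:
  assumes "V \<subseteq> U" "0 \<le> p" "0 \<le> C"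
    and bound_K': "\<forall>f\<in>Bergman p V lam. \<forall>w\<in>K'. norm (f w) \<le> C * Lp_wnorm p V lam f"
    and boundaries_in_K':
      "\<And>z. z \<in> K \<Longrightarrow> \<exists>r. (\<forall>j. 0 < r j) \<and> cpolydisc z r \<subseteq> U \<and> distinguished_boundary z r \<subseteq> K'"
    and f: "f \<in> Bergman p U lam" and "z \<in> K"
  shows "norm (f z) \<le> C * Lp_wnorm p U lam f"
proof -
  obtain r where "\<forall>j. 0 < r j" "cpolydisc z r \<subseteq> U" and "distinguished_boundary z r \<subseteq> K'"
    using boundaries_in_K' \<open>z \<in> K\<close> by blast
  moreover have "norm (f w) \<le> C * Lp_wnorm p U lam f" if "w \<in> K'" for w
  proof -
    have "f \<in> Bergman p V lam"
      using f Bergman_antimono[OF \<open>V \<subseteq> U\<close>] by blast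
    with bound_K' \<open>w \<in> K'\<close> have "norm (f w) \<le> C * Lp_wnorm p V lam f" by blast
    also have "\<dots> \<le> C * Lp_wnorm p U lam f"
      using Lp_wnorm_mono_set[OF \<open>V \<subseteq> U\<close> \<open>0 \<le> p\<close> f] \<open>0 \<le> C\<close> by (rule mult_left_mono)
    finally show ?thesis .
  qed
  moreover have "holo f U" using f by (simp add: Bergman_def)
  ultimately show ?thesis
    by (intro holo_norm_le_on_distinguished_boundary[of f U z r]) auto
qed

theorem proposition3p4:
  fixes p :: real and U :: "(complex ^ 'n) set" and lam :: "complex ^ 'n \<Rightarrow> ennreal"
  assumes "1 < p"
    and "domain U"
    and "(\<lambda>z. indicator U z * lam z) \<in> borel_measurable lebesgue"
    and "admissible p (U - coord_hyperplanes) lam"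
  shows "admissible p U lam"
proof -
  let ?V = "U - coord_hyperplanes :: (complex ^ 'n) set"
  have "\<exists>C>0. \<forall>f\<in>Bergman p U lam. \<forall>z\<in>K. norm (f z) \<le> C * Lp_wnorm p U lam f"
    if "compact K" "K \<subseteq> U" for K
  proof -
    have "open U" using \<open>domain U\<close> by (simp add: domain_def)
    then obtain K' where "compact K'" "K' \<subseteq> ?V" and boundaries_in_K':
      "\<And>z. z \<in> K \<Longrightarrow> \<exists>r. (\<forall>j. 0 < r j) \<and> cpolydisc z r \<subseteq> U \<and> distinguished_boundary z r \<subseteq> K'"
      using compact_set_of_distinguished_boundaries[OF \<open>compact K\<close> \<open>K \<subseteq> U\<close>] by blast
    then obtain C where "C > 0" and bound_K': "\<forall>f\<in>Bergman p ?V lam. \<forall>w\<in>K'. norm (f w) \<le> C * Lp_wnorm p ?V lam f"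
      using assms(4) unfolding admissible_def by blast
    have "norm (f z) \<le> C * Lp_wnorm p U lam f" if "f \<in> Bergman p U lam" "z \<in> K" for f z
      using Bergman_norm_le_via_distinguished_boundaries[OF Diff_subset _ _ bound_K' boundaries_in_K' that]
        \<open>1 < p\<close> \<open>C > 0\<close> by simp
    with \<open>C > 0\<close> show ?thesis by blast
  qed
  moreover have "weight U lam"
    using assms(4) weight_Diff_null[OF _ coord_hyperplanes_null assms(3)]
    unfolding admissible_def by blast
  ultimately show ?thesis
    unfolding admissible_def by blast
qed

end
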